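(* Fix an integer $k\ge 0$ and a link $i$ of a kinematic tree. Suppose all quantities below depend differentiably on a scalar parameter $\varepsilon$, and let $\delta$ denote $\frac{d}{d\varepsilon}$ at $\varepsilon=0$. Let $\eta_{L_i}\in\mathbb{R}^{6(k+1)}$ be the tangent vector of the world-frame comprehensive force transformation of link $i$, i.e. the vector with $$\delta\big({}^{w}\mathfrak{A}^{*}_{L_i}\big)={}^{w}\mathfrak{A}^{*}_{L_i}\,[\eta_{L_i}\times^{*}_{6\cdot k}].$$ Define the world-frame comprehensive momenta ${}^{w}\mathfrak{h}_{L_j}:={}^{w}\mathfrak{A}^{*}_{L_j}\mathfrak{h}_{L_j}$ and ${}^{w}\mathfrak{h}_{J_j}:={}^{w}\mathfrak{A}^{*}_{L_j}\mathfrak{h}_{J_j}$ for every link $j$, and assume they satisfy, for every link $j$, the propagation rule ${}^{w}\mathfrak{h}_{J_j}={}^{w}\mathfrak{h}_{L_j}+\sum_{c\in\mu(j)}{}^{w}\mathfrak{h}_{J_c}$, where $\mu(j)$ is the set of children of $j$. Then: (1) (world transformation) $\delta\,{}^{w}\mathfrak{h}_{L_i}={}^{w}\mathfrak{A}^{*}_{L_i}\,\delta\mathfrak{h}_{L_i}+{}^{w}\mathfrak{A}^{*}_{L_i}\,[\mathfrak{h}_{L_i}\,\hat{\times}^{*}_{6\cdot k}]\,\eta_{L_i}$; (2) (momentum propagation) $\delta\,{}^{w}\mathfrak{h}_{J_i}=\sum_{j\in\bar\mu(i)} E\,\delta\,{}^{w}\mathfrak{h}_{L_j}$, where $\bar\mu(i)$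 is the set consisting of $i$ and all its descendants and $E$ is the identity matrix; (3) (local recovery) $\delta\mathfrak{h}_{J_i}=\big({}^{w}\mathfrak{A}^{*}_{L_i}\big)^{-1}\delta\,{}^{w}\mathfrak{h}_{J_i}-\Big[\Big(\big({}^{w}\mathfrak{A}^{*}_{L_i}\big)^{-1}\,{}^{w}\mathfrak{h}_{J_i}\Big)\hat{\times}^{*}_{6\cdot k}\Big]\eta_{L_i}$.
   Context: Notation. For $u\in\mathbb{R}^3$, $[u\times]$ is the skew-symmetric cross-product matrix. For $u=(v_0,v_1)\in\mathbb{R}^6$ ($v_0,v_1\in\mathbb{R}^3$), $[u\times_6]=\begin{bmatrix}[v_0\times]&0\\ [v_1\times]&[v_0\times]\end{bmatrix}$ and the force-space operator is $[u\times^{*}_6]:=-[u\times_6]^{T}$. For a stacked vector $u=(u_0,\dots,u_k)\in\mathbb{R}^{6(k+1)}$ with $u_m\in\mathbb{R}^6$, $[u\times^{*}_{6\cdot k}]$ is the block lower-triangular Toeplitz matrix whose $(l,m)$ block ($l\ge m$) is $[u_{l-m}\times^{*}_6]$ and whose blocks above the diagonal are zero. The operator $[x\,\hat{\times}^{*}_{6\cdot k}]$ is the matrix defined by $[x\,\hat{\times}^{*}_{6\cdot k}]\,y=[y\times^{*}_{6\cdot k}]\,x$ for all $y$. The comprehensive representation of a time-dependent quantity $a(t)$ up to order $k$ is the stacked vector $(a, \tfrac{1}{1!}\dot a,\dots,\tfrac{1}{k!}a^{(k)})$. Setting: a multi-link system with tree structure; each link $j$ has a comprehensive link momentum $\mathfrak{h}_{L_j}\in\mathbb{R}^{6(k+1)}$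 (stacked spatial momentum and its scaled time derivatives, in the local frame of link $j$) and a comprehensive joint momentum $\mathfrak{h}_{J_j}\in\mathbb{R}^{6(k+1)}$ (momentum transmitted through the joint connecting link $j$ to its parent, in the local frame of link $j$). ${}^{w}\mathfrak{A}^{*}_{L_j}$ is the comprehensive force transformation of link $j$ relative to the world: the block lower-triangular Toeplitz matrix whose $l$-th subdiagonal block is $\frac{1}{l!}\frac{d^l}{dt^l}A^{*}_j(t)$, where $A^{*}_j=\begin{bmatrix}R_j&[p_j\times]R_j\\0&R_j\end{bmatrix}$ with $(R_j,p_j)$ the world orientation and position of link $j$; it is invertible. *)

theory Defs
  imports "HOL-Analysis.Analysis"
begin

text \<open>Vectors of R^N are functions nat => real (only indices < N matter);
  N x N matrices are functions nat => nat => real (only indices < N matter).\<close>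

definition matvec :: "nat \<Rightarrow> (nat \<Rightarrow> nat \<Rightarrow> real) \<Rightarrow> (nat \<Rightarrow> real) \<Rightarrow> nat \<Rightarrow> real" where
  "matvec N M x = (\<lambda>r. if r < N then (\<Sum>c<N. M r c * x c) else 0)"

definition matmul :: "nat \<Rightarrow> (nat \<Rightarrow> nat \<Rightarrow> real) \<Rightarrow> (nat \<Rightarrow> nat \<Rightarrow> real) \<Rightarrow> nat \<Rightarrow> nat \<Rightarrow> real" where
  "matmul N M P = (\<lambda>r c. if r < N \<and> c < N then (\<Sum>s<N. M r s * P s c) else 0)"

definition idmat :: "nat \<Rightarrow> nat \<Rightarrow> nat \<Rightarrow> real" where
  "idmat N = (\<lambda>r c. if r < N \<and> c < N \<and> r = c then 1 else 0)"

definition mat_invertible :: "nat \<Rightarrow> (nat \<Rightarrow> nat \<Rightarrow> real) \<Rightarrow> bool" where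
  "mat_invertible N M \<longleftrightarrow> (\<exists>B. matmul N M B = idmat N \<and> matmul N B M = idmat N)"

definition mat_inv :: "nat \<Rightarrow> (nat \<Rightarrow> nat \<Rightarrow> real) \<Rightarrow> nat \<Rightarrow> nat \<Rightarrow> real" where
  "mat_inv N M = (SOME B. matmul N M B = idmat N \<and> matmul N B M = idmat N)"

definition skew3 :: "(nat \<Rightarrow> real) \<Rightarrow> nat \<Rightarrow> nat \<Rightarrow> real" where
  "skew3 u i j =
     (if i = 0 \<and> j = 1 then - u 2 else if i = 0 \<and> j = 2 then u 1
      else if i = 1 \<and> j = 0 then u 2 else if i = 1 \<and> j = 2 then - u 0
      else if i = 2 \<and> j = 0 then - u 1 else if i = 2 \<and> j = 1 then u 0 else 0)"

definition cross6 :: "(nat \<Rightarrow> real) \<Rightarrow> nat \<Rightarrow> nat \<Rightarrow> real" where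
  "cross6 u i j =
     (if i < 3 \<and> j < 3 then skew3 u i j
      else if 3 \<le> i \<and> i < 6 \<and> j < 3 then skew3 (\<lambda>r. u (r + 3)) (i - 3) j
      else if 3 \<le> i \<and> i < 6 \<and> 3 \<le> j \<and> j < 6 then skew3 u (i - 3) (j - 3)
      else 0)"

definition crossf6 :: "(nat \<Rightarrow> real) \<Rightarrow> nat \<Rightarrow> nat \<Rightarrow> real" where
  "crossf6 u i j = - cross6 u j i"

text \<open>[u x*_{6.k}]: block lower-triangular Toeplitz, block (l,m) = [u_{l-m} x*_6],
  where u_m consists of components 6m .. 6m+5 of u.\<close>
definition crossfk :: "nat \<Rightarrow> (nat \<Rightarrow> real) \<Rightarrow> nat \<Rightarrow> nat \<Rightarrow> real" where
  "crossfk k u i j =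
     (if i < 6 * (k + 1) \<and> j < 6 * (k + 1) \<and> j div 6 \<le> i div 6
      then crossf6 (\<lambda>r. u (6 * (i div 6 - j div 6) + r)) (i mod 6) (j mod 6)
      else 0)"

text \<open>[x hat-x*_{6.k}], the matrix with [x hat-x*] y = [y x*] x for all y;
  written out column by column: column j is [e_j x*] x.\<close>
definition hatcrossfk :: "nat \<Rightarrow> (nat \<Rightarrow> real) \<Rightarrow> nat \<Rightarrow> nat \<Rightarrow> real" where
  "hatcrossfk k x i j =
     (if j < 6 * (k + 1) then matvec (6 * (k + 1)) (crossfk k (\<lambda>r. if r = j then 1 else 0)) x i
      else 0)"

definition delta :: "(real \<Rightarrow> nat \<Rightarrow> real) \<Rightarrow> nat \<Rightarrow> real" where
  "delta v = (\<lambda>r. deriv (\<lambda>e. v e r) 0)"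

text \<open>Kinematic tree: finite set of links with a parent map (None = attached to the base).\<close>
definition child_rel :: "'l set \<Rightarrow> ('l \<Rightarrow> 'l option) \<Rightarrow> ('l \<times> 'l) set" where
  "child_rel Links par = {(c, p). c \<in> Links \<and> par c = Some p}"

definition kin_tree :: "'l set \<Rightarrow> ('l \<Rightarrow> 'l option) \<Rightarrow> bool" where
  "kin_tree Links par \<longleftrightarrow>
     finite Links \<and> Links \<noteq> {} \<and>
     (\<forall>j\<in>Links. \<forall>p. par j = Some p \<longrightarrow> p \<in> Links) \<and>
     (\<exists>!r. r \<in> Links \<and> par r = None) \<and>
     (\<forall>j\<in>Links. (j, j) \<notin> (child_rel Links par)\<^sup>+)"

definition children :: "'l set \<Rightarrow> ('l \<Rightarrow> 'l option) \<Rightarrow> 'l \<Rightarrow> 'l set" where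
  "children Links par j = {c \<in> Links. par c = Some j}"

definition subtree :: "'l set \<Rightarrow> ('l \<Rightarrow> 'l option) \<Rightarrow> 'l \<Rightarrow> 'l set" where
  "subtree Links par i = {i} \<union> {j \<in> Links. (j, i) \<in> (child_rel Links par)\<^sup>+}"

end

theory Submission
  imports Defs
begin

text \<open>Differentiating \<open>w = A h\<close> entrywise gives the product rule
  \<open>\<delta>w = (\<delta>A) h + A \<delta>h\<close>, and the tangent vector \<open>\<eta>\<close> rewrites
  \<open>(\<delta>A) h = A [\<eta> \<times>*] h\<close> as \<open>A [h \<times>*^] \<eta>\<close>, because \<open>[u \<times>*]\<close> is linear
  in \<open>u\<close> and \<open>[h \<times>*^]\<close> is the matrix of \<open>u \<mapsto> [u \<times>*] h\<close>. This is (1), and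
  solving (1) for the joint momentum with the inverse of \<open>A\<close> gives (3).
  For (2), unrolling the propagation rule by well-founded induction on the
  (finite, acyclic) child relation, using that the subtrees of distinct children
  are disjoint, writes the world joint momentum of \<open>i\<close> as the sum of the world
  link momenta over the subtree of \<open>i\<close>; and \<open>\<delta>\<close> commutes with this finite sum.\<close>

lemma matvec_cong: "(\<And>s. s < N \<Longrightarrow> v s = w s) \<Longrightarrow> matvec N M v r = matvec N M w r"
  by (simp add: matvec_def)

lemma matvec_add: "matvec N M (\<lambda>s. v s + w s) r = matvec N M v r + matvec N M w r"
  by (simp add: matvec_def sum.distrib algebra_simps)

lemma matvec_matmul:
  assumes "r < N"
  shows "matvec N M (matvec N P x) r = matvec N (matmul N M P) x r"
proof -
  have "matvec N M (matvec N P x) r = (\<Sum>s<N. \<Sum>c<N. M r s * (P s c * x c))"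
    using assms by (simp add: matvec_def sum_distrib_left)
  also have "\<dots> = (\<Sum>c<N. \<Sum>s<N. M r s * (P s c * x c))"
    by (rule sum.swap)
  also have "\<dots> = matvec N (matmul N M P) x r"
    using assms by (simp add: matvec_def matmul_def sum_distrib_left sum_distrib_right mult_ac)
  finally show ?thesis .
qed

lemma matvec_idmat:
  assumes "r < N"
  shows "matvec N (idmat N) v r = v r"
  using assms by (simp add: matvec_def idmat_def if_distrib[of "\<lambda>t. t * _"] sum.delta cong: if_cong)

lemma matmul_mat_inv_left:
  assumes "mat_invertible N M"
  shows "matmul N (mat_inv N M) M = idmat N"
proof -
  have "matmul N M (mat_inv N M) = idmat N \<and> matmul N (mat_inv N M) M = idmat N"
    using assms unfolding mat_invertible_def mat_inv_def by (rule someI_ex)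
  then show ?thesis ..
qed

lemma matvec_mat_inv_cancel:
  assumes "mat_invertible N M" and "r < N"
  shows "matvec N (mat_inv N M) (matvec N M v) r = v r"
  using assms by (simp add: matvec_matmul matmul_mat_inv_left matvec_idmat)

abbreviation basis_vec :: "nat \<Rightarrow> nat \<Rightarrow> real" where
  "basis_vec j \<equiv> (\<lambda>r. if r = j then 1 else 0)"

lemma cross6_eq_sum_basis: "cross6 u a b = (\<Sum>m<6. u m * cross6 (basis_vec m) a b)"
proof (cases "a < 6 \<and> b < 6")
  case True
  then have "a \<in> {0, 1, 2, 3, 4, 5}" "b \<in> {0, 1, 2, 3, 4, 5}" by auto
  then show ?thesis
    by (elim insertE emptyE) (simp_all add: cross6_def skew3_def eval_nat_numeral)
next
  case False
  then show ?thesis by (auto simp: cross6_def)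
qed

lemma crossf6_eq_sum_basis: "crossf6 u a b = (\<Sum>m<6. u m * crossf6 (basis_vec m) a b)"
  unfolding crossf6_def by (subst cross6_eq_sum_basis) (simp add: sum_negf)

lemma sum_basis_shift:
  fixes F :: "(nat \<Rightarrow> real) \<Rightarrow> real"
  assumes F: "\<And>v. F v = (\<Sum>m<n. v m * F (basis_vec m))" and bound: "off + n \<le> N"
  shows "F (\<lambda>r. u (off + r)) = (\<Sum>j<N. u j * F (\<lambda>r. basis_vec j (off + r)))"
proof -
  have "F (\<lambda>r. u (off + r)) = (\<Sum>m<n. \<Sum>j<N. if j = off + m then u j * F (basis_vec m) else 0)"
    using bound by (subst F) (auto intro!: sum.cong)
  also have "\<dots> = (\<Sum>j<N. \<Sum>m<n. if j = off + m then u j * F (basis_vec m) else 0)"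
    by (rule sum.swap)
  also have "\<dots> = (\<Sum>j<N. u j * F (\<lambda>r. basis_vec j (off + r)))"
    by (subst (2) F) (auto simp: sum_distrib_left intro!: sum.cong)
  finally show ?thesis .
qed

lemma crossfk_eq_sum_basis:
  "crossfk k u a b = (\<Sum>j<6 * (k + 1). u j * crossfk k (basis_vec j) a b)"
proof (cases "a < 6 * (k + 1) \<and> b < 6 * (k + 1) \<and> b div 6 \<le> a div 6")
  case True
  define off where "off = 6 * (a div 6 - b div 6)"
  have "a div 6 < k + 1"
    using True by (simp add: less_mult_imp_div_less)
  then have "off \<le> 6 * k" by (simp add: off_def)
  then have "off + 6 \<le> 6 * (k + 1)" by simp
  moreover have "crossfk k v a b = crossf6 (\<lambda>r. v (off + r)) (a mod 6) (b mod 6)" for v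
    using True by (simp add: crossfk_def off_def)
  ultimately show ?thesis
    using sum_basis_shift[where F = "\<lambda>v. crossf6 v (a mod 6) (b mod 6)", OF crossf6_eq_sum_basis]
    by simp
next
  case False
  then have "crossfk k v a b = 0" for v
    unfolding crossfk_def by (rule if_not_P)
  then show ?thesis by simp
qed

lemma matvec_crossfk_eq_hatcrossfk:
  assumes "s < 6 * (k + 1)"
  shows "matvec (6 * (k + 1)) (crossfk k y) x s = matvec (6 * (k + 1)) (hatcrossfk k x) y s"
proof -
  let ?N = "6 * (k + 1)"
  have "matvec ?N (crossfk k y) x s = (\<Sum>c<?N. \<Sum>j<?N. y j * crossfk k (basis_vec j) s c * x c)"
    using assms by (simp add: matvec_def crossfk_eq_sum_basis[of k y] sum_distrib_right)
  also have "\<dots> = (\<Sum>j<?N. \<Sum>c<?N. y j * crossfk k (basis_vec j) s c * x c)"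
    by (rule sum.swap)
  also have "\<dots> = matvec ?N (hatcrossfk k x) y s"
    using assms by (simp add: matvec_def hatcrossfk_def sum_distrib_left mult_ac)
  finally show ?thesis .
qed

lemma hatcrossfk_cong:
  "(\<And>s. s < 6 * (k + 1) \<Longrightarrow> x s = y s) \<Longrightarrow> hatcrossfk k x = hatcrossfk k y"
  by (intro ext) (simp add: hatcrossfk_def matvec_def)

definition delta_mat :: "(real \<Rightarrow> nat \<Rightarrow> nat \<Rightarrow> real) \<Rightarrow> nat \<Rightarrow> nat \<Rightarrow> real" where
  "delta_mat M = (\<lambda>a b. deriv (\<lambda>e. M e a b) 0)"

lemma has_real_derivative_matvec:
  assumes dM: "\<forall>a<N. \<forall>b<N. (\<lambda>e. M e a b) differentiable (at 0)"
    and dx: "\<forall>s<N. (\<lambda>e. x e s) differentiable (at 0)"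
    and r: "r < N"
  shows "((\<lambda>e. matvec N (M e) (x e) r) has_real_derivative
           matvec N (delta_mat M) (x 0) r + matvec N (M 0) (delta x) r) (at 0)"
proof -
  have "((\<lambda>e. \<Sum>c<N. M e r c * x e c) has_real_derivative
          (\<Sum>c<N. delta_mat M r c * x 0 c + M 0 r c * delta x c)) (at 0)"
  proof (rule DERIV_sum)
    fix c assume "c \<in> {..<N}"
    then have "((\<lambda>e. M e r c) has_real_derivative delta_mat M r c) (at 0)"
      and "((\<lambda>e. x e c) has_real_derivative delta x c) (at 0)"
      using dM dx r by (simp_all add: delta_mat_def delta_def DERIV_deriv_iff_real_differentiable)
    from DERIV_mult[OF this] show "((\<lambda>e. M e r c * x e c) has_real_derivative
        delta_mat M r c * x 0 c + M 0 r c * delta x c) (at 0)"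
      by (simp add: mult.commute)
  qed
  then show ?thesis
    using r by (simp add: matvec_def sum.distrib)
qed

lemma delta_matvec:
  assumes "\<forall>a<N. \<forall>b<N. (\<lambda>e. M e a b) differentiable (at 0)"
    and "\<forall>s<N. (\<lambda>e. x e s) differentiable (at 0)"
    and "r < N"
  shows "delta (\<lambda>e. matvec N (M e) (x e)) r
           = matvec N (delta_mat M) (x 0) r + matvec N (M 0) (delta x) r"
  using DERIV_imp_deriv[OF has_real_derivative_matvec[OF assms]] by (simp add: delta_def)

lemma matvec_differentiable:
  fixes M :: "real \<Rightarrow> nat \<Rightarrow> nat \<Rightarrow> real" and x :: "real \<Rightarrow> nat \<Rightarrow> real"
  assumes "\<forall>a<N. \<forall>b<N. (\<lambda>e. M e a b) differentiable (at 0)"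
    and "\<forall>s<N. (\<lambda>e. x e s) differentiable (at 0)"
    and "r < N"
  shows "(\<lambda>e. matvec N (M e) (x e) r) differentiable (at 0)"
  using has_real_derivative_matvec[OF assms] DERIV_deriv_iff_real_differentiable DERIV_imp_deriv
  by metis

lemma delta_transform_crossfk:
  assumes N: "N = 6 * (k + 1)"
    and dM: "\<forall>a<N. \<forall>b<N. (\<lambda>e. M e a b) differentiable (at 0)"
    and dx: "\<forall>s<N. (\<lambda>e. x e s) differentiable (at 0)"
    and eta: "\<forall>a<N. \<forall>b<N. delta_mat M a b = matmul N (M 0) (crossfk k eta) a b"
    and r: "r < N"
  shows "delta (\<lambda>e. matvec N (M e) (x e)) r
           = matvec N (M 0) (delta x) r + matvec N (M 0) (matvec N (hatcrossfk k (x 0)) eta) r"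
proof -
  have "matvec N (delta_mat M) (x 0) r = matvec N (matmul N (M 0) (crossfk k eta)) (x 0) r"
    using eta r by (simp add: matvec_def)
  also have "\<dots> = matvec N (M 0) (matvec N (crossfk k eta) (x 0)) r"
    using r by (simp add: matvec_matmul)
  also have "\<dots> = matvec N (M 0) (matvec N (hatcrossfk k (x 0)) eta) r"
    by (intro matvec_cong) (simp only: N matvec_crossfk_eq_hatcrossfk)
  finally show ?thesis
    using delta_matvec[OF dM dx r] by simp
qed

lemma delta_local_from_world:
  assumes N: "N = 6 * (k + 1)"
    and inv: "mat_invertible N (M 0)"
    and dM: "\<forall>a<N. \<forall>b<N. (\<lambda>e. M e a b) differentiable (at 0)"
    and dx: "\<forall>s<N. (\<lambda>e. x e s) differentiable (at 0)"
    and eta: "\<forall>a<N. \<forall>b<N. delta_mat M a b = matmul N (M 0) (crossfk k eta) a b"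
    and r: "r < N"
  shows "delta x r
           = matvec N (mat_inv N (M 0)) (delta (\<lambda>e. matvec N (M e) (x e))) r
           - matvec N (hatcrossfk k (matvec N (mat_inv N (M 0)) (matvec N (M 0) (x 0)))) eta r"
proof -
  define y where "y = (\<lambda>s. delta x s + matvec N (hatcrossfk k (x 0)) eta s)"
  have "matvec N (mat_inv N (M 0)) (delta (\<lambda>e. matvec N (M e) (x e))) r
      = matvec N (mat_inv N (M 0)) (matvec N (M 0) y) r"
    using delta_transform_crossfk[OF N dM dx eta]
    by (intro matvec_cong) (simp add: y_def matvec_add)
  also have "\<dots> = y r"
    using inv r by (rule matvec_mat_inv_cancel)
  finally have world: "matvec N (mat_inv N (M 0)) (delta (\<lambda>e. matvec N (M e) (x e))) r = y r" .
  have "hatcrossfk k (matvec N (mat_inv N (M 0)) (matvec N (M 0) (x 0))) = hatcrossfk k (x 0)"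
    using inv N by (intro hatcrossfk_cong) (simp add: matvec_mat_inv_cancel)
  with world show ?thesis
    by (simp add: y_def)
qed

lemma children_eq_child_rel: "children Links par x = {c. (c, x) \<in> child_rel Links par}"
  by (simp add: children_def child_rel_def)

lemma trancl_child_rel_in_Links: "(a, b) \<in> (child_rel Links par)\<^sup>+ \<Longrightarrow> a \<in> Links"
  by (induction rule: trancl_induct) (auto simp: child_rel_def)

lemma subtree_eq_rtrancl: "subtree Links par x = {d. (d, x) \<in> (child_rel Links par)\<^sup>*}"
  by (auto simp: subtree_def rtrancl_eq_or_trancl dest: trancl_child_rel_in_Links)

lemma subtree_unfold:
  "subtree Links par x = insert x (\<Union>c\<in>children Links par x. subtree Links par c)"
  unfolding subtree_eq_rtrancl children_eq_child_rel
  by (auto elim: rtranclE intro: rtrancl_into_rtrancl)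

lemma subtree_subset: "x \<in> Links \<Longrightarrow> subtree Links par x \<subseteq> Links"
  by (auto simp: subtree_def dest: trancl_child_rel_in_Links)

lemma kin_tree_acyclic: "kin_tree Links par \<Longrightarrow> acyclic (child_rel Links par)"
  by (auto simp: kin_tree_def acyclic_def dest: trancl_child_rel_in_Links)

lemma kin_tree_wf: "kin_tree Links par \<Longrightarrow> wf (child_rel Links par)"
proof (rule finite_acyclic_wf)
  assume tree: "kin_tree Links par"
  then have "child_rel Links par \<subseteq> Links \<times> Links" and "finite Links"
    by (auto simp: kin_tree_def child_rel_def)
  then show "finite (child_rel Links par)"
    by (meson finite_SigmaI finite_subset)
  show "acyclic (child_rel Links par)"
    using tree by (rule kin_tree_acyclic)
qed

lemma not_in_subtree_child:
  assumes "kin_tree Links par" and "c \<in> children Links par x"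
  shows "x \<notin> subtree Links par c"
proof
  assume "x \<in> subtree Links par c"
  with assms(2) have "(x, x) \<in> (child_rel Links par)\<^sup>+"
    by (auto simp: subtree_eq_rtrancl children_eq_child_rel intro: rtrancl_into_trancl1)
  with kin_tree_acyclic[OF assms(1)] show False
    by (simp add: acyclic_def)
qed

lemma subtree_children_disjoint:
  assumes tree: "kin_tree Links par"
    and c: "c \<in> children Links par x" and c': "c' \<in> children Links par x" and "c \<noteq> c'"
  shows "subtree Links par c \<inter> subtree Links par c' = {}"
proof (rule ccontr)
  let ?R = "child_rel Links par"
  have sv: "single_valued ?R"
    by (auto simp: single_valued_def child_rel_def)
  assume "subtree Links par c \<inter> subtree Links par c' \<noteq> {}"
  then obtain d where "(d, c) \<in> ?R\<^sup>*" "(d, c') \<in> ?R\<^sup>*"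
    by (auto simp: subtree_eq_rtrancl)
  then have "(c, c') \<in> ?R\<^sup>+ \<or> (c', c) \<in> ?R\<^sup>+"
    using single_valued_confluent[OF sv] \<open>c \<noteq> c'\<close> by (auto simp: rtrancl_eq_or_trancl)
  \<comment> \<open>parents are unique, so every strict ancestor of a child of \<open>x\<close> is \<open>x\<close> or an ancestor of \<open>x\<close>\<close>
  moreover have "(x, b) \<in> ?R\<^sup>*" if "(a, b) \<in> ?R\<^sup>+" and "(a, x) \<in> ?R" for a b
    using that sv by (auto simp: single_valued_def dest: tranclD)
  ultimately have "x \<in> subtree Links par c \<or> x \<in> subtree Links par c'"
    using c c' by (auto simp: subtree_eq_rtrancl children_eq_child_rel)
  with not_in_subtree_child[OF tree] c c' show False
    by blast
qed

lemma finite_subtree: "kin_tree Links par \<Longrightarrow> finite (subtree Links par x)"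
  by (auto simp: kin_tree_def subtree_def)

lemma finite_children: "kin_tree Links par \<Longrightarrow> finite (children Links par x)"
  by (simp add: kin_tree_def children_def)

lemma sum_subtree_unfold:
  assumes tree: "kin_tree Links par"
  shows "(\<Sum>d\<in>subtree Links par x. f d)
           = f x + (\<Sum>c\<in>children Links par x. \<Sum>d\<in>subtree Links par c. f d)"
proof -
  have "(\<Sum>c\<in>children Links par x. \<Sum>d\<in>subtree Links par c. f d)
      = (\<Sum>d\<in>(\<Union>c\<in>children Links par x. subtree Links par c). f d)"
    using subtree_children_disjoint[OF tree]
    by (intro sum.UNION_disjoint[symmetric] finite_children[OF tree] ballI finite_subtree[OF tree])
      blast+
  moreover have "x \<notin> (\<Union>c\<in>children Links par x. subtree Links par c)"
    using not_in_subtree_child[OF tree] by blast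
  ultimately show ?thesis
    using tree by (subst subtree_unfold) (simp add: finite_children finite_subtree)
qed

lemma sum_subtree_of_recursion:
  fixes f g :: "'l \<Rightarrow> 'a::comm_monoid_add"
  assumes tree: "kin_tree Links par" and "j \<in> Links"
    and rec: "\<forall>j\<in>Links. g j = f j + (\<Sum>c\<in>children Links par j. g c)"
  shows "g j = (\<Sum>d\<in>subtree Links par j. f d)"
  using \<open>j \<in> Links\<close>
proof (induction j rule: wf_induct_rule[OF kin_tree_wf[OF tree]])
  case (1 x)
  then have IH: "g c = (\<Sum>d\<in>subtree Links par c. f d)" if "c \<in> children Links par x" for c
    using that by (auto simp: children_def child_rel_def)
  have "g x = f x + (\<Sum>c\<in>children Links par x. g c)"
    using rec "1.prems" by blast
  also have "\<dots> = f x + (\<Sum>c\<in>children Links par x. \<Sum>d\<in>subtree Links par c. f d)"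
    using IH by simp
  also have "\<dots> = (\<Sum>d\<in>subtree Links par x. f d)"
    by (rule sum_subtree_unfold[OF tree, symmetric])
  finally show ?case .
qed

lemma delta_subtree_sum:
  assumes tree: "kin_tree Links par" and i: "i \<in> Links"
    and rec: "\<forall>e. \<forall>j\<in>Links. g j e r = f j e r + (\<Sum>c\<in>children Links par j. g c e r)"
    and df: "\<forall>j\<in>Links. (\<lambda>e. f j e r) differentiable (at 0)"
  shows "delta (g i) r = (\<Sum>j\<in>subtree Links par i. delta (f j) r)"
proof -
  have "g i e r = (\<Sum>j\<in>subtree Links par i. f j e r)" for e
    using sum_subtree_of_recursion[OF tree i, of "\<lambda>j. g j e r" "\<lambda>j. f j e r"] rec by simp
  moreover have "((\<lambda>e. \<Sum>j\<in>subtree Links par i. f j e r) has_real_derivative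
      (\<Sum>j\<in>subtree Links par i. delta (f j) r)) (at 0)"
  proof (rule DERIV_sum)
    fix j assume "j \<in> subtree Links par i"
    with df subtree_subset[OF i] show "((\<lambda>e. f j e r) has_real_derivative delta (f j) r) (at 0)"
      by (auto simp: delta_def DERIV_deriv_iff_real_differentiable)
  qed
  ultimately show ?thesis
    by (simp add: delta_def DERIV_imp_deriv)
qed

theorem lemma4:
  fixes k :: nat and Links :: "'l set" and par :: "'l \<Rightarrow> 'l option" and i :: 'l
    and A :: "'l \<Rightarrow> real \<Rightarrow> nat \<Rightarrow> nat \<Rightarrow> real"
    and hL hJ :: "'l \<Rightarrow> real \<Rightarrow> nat \<Rightarrow> real"
    and eta :: "nat \<Rightarrow> real"
  defines "N \<equiv> 6 * (k + 1)"
  defines "whL \<equiv> (\<lambda>j e. matvec N (A j e) (hL j e))"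
    and "whJ \<equiv> (\<lambda>j e. matvec N (A j e) (hJ j e))"
  assumes tree: "kin_tree Links par" and i: "i \<in> Links"
    and inv: "\<forall>j\<in>Links. \<forall>e. mat_invertible N (A j e)"
    and dA: "\<forall>j\<in>Links. \<forall>a<N. \<forall>b<N. (\<lambda>e. A j e a b) differentiable (at 0)"
    and dhL: "\<forall>j\<in>Links. \<forall>r<N. (\<lambda>e. hL j e r) differentiable (at 0)"
    and dhJ: "\<forall>j\<in>Links. \<forall>r<N. (\<lambda>e. hJ j e r) differentiable (at 0)"
    and eta: "\<forall>a<N. \<forall>b<N. deriv (\<lambda>e. A i e a b) 0 = matmul N (A i 0) (crossfk k eta) a b"
    and propag: "\<forall>e. \<forall>j\<in>Links. \<forall>r<N.
                 whJ j e r = whL j e r + (\<Sum>c\<in>children Links par j. whJ c e r)"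
  shows "(\<forall>r<N. delta (whL i) r =
              matvec N (A i 0) (delta (hL i)) r
            + matvec N (A i 0) (matvec N (hatcrossfk k (hL i 0)) eta) r)
       \<and> (\<forall>r<N. delta (whJ i) r =
              (\<Sum>j\<in>subtree Links par i. matvec N (idmat N) (delta (whL j)) r))
       \<and> (\<forall>r<N. delta (hJ i) r =
              matvec N (mat_inv N (A i 0)) (delta (whJ i)) r
            - matvec N (hatcrossfk k (matvec N (mat_inv N (A i 0)) (whJ i 0))) eta r)"
proof -
  have N: "N = 6 * (k + 1)"
    by (simp add: N_def)
  have dAi: "\<forall>a<N. \<forall>b<N. (\<lambda>e. A i e a b) differentiable (at 0)"
    using dA i by blast
  have eta_i: "\<forall>a<N. \<forall>b<N. delta_mat (A i) a b = matmul N (A i 0) (crossfk k eta) a b"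
    using eta by (simp add: delta_mat_def)
  have joint: "delta (whJ i) r = (\<Sum>j\<in>subtree Links par i. delta (whL j) r)" if r: "r < N" for r
  proof (rule delta_subtree_sum[OF tree i])
    show "\<forall>e. \<forall>j\<in>Links. whJ j e r = whL j e r + (\<Sum>c\<in>children Links par j. whJ c e r)"
      using propag r by blast
    show "\<forall>j\<in>Links. (\<lambda>e. whL j e r) differentiable (at 0)"
      unfolding whL_def using matvec_differentiable dA dhL r by blast
  qed
  show ?thesis
    using joint delta_transform_crossfk[OF N dAi _ eta_i] delta_local_from_world[OF N _ dAi _ eta_i]
      dhL dhJ inv i
    by (simp add: whL_def whJ_def matvec_idmat)
qed

end
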